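(* Let $a_0,\dots,a_N\in\mathbb{Z}$ and $r,d_{\min},d_{\max}\in\mathbb{N}$ with $r\le N$ and $d_{\min}\le d_{\max}$, and for $d\in\mathbb{N}$ put $M_d=(A\odot B_d\,|\,A\odot B_{d-1}\,|\,\cdots\,|\,A\odot B_0)\in\mathbb{Q}^{(N-r+1)\times(r+1)(d+1)}$. Consider the following procedure (Algorithm 3). Set $L=\emptyset$. For $d=d_{\min},\dots,d_{\max}$: compute a $\mathbb{Z}$-module basis $v_1,\dots,v_m\in\mathbb{Z}^{(r+1)(d+1)}$ of $\ker_{\mathbb{Z}}M_d$; if $d>d_{\min}$, replace $v_1,\dots,v_m$ by the nonzero rows of the Hermite normal form of the matrix with rows $v_1,\dots,v_m$, and let $\ell$ be such that the first $r+1$ components of $v_i$ are all zero if and only if $i>\ell$; if $d=d_{\min}$ let $\ell=m$; then append $r+1$ leading zeros to each vector in $L$, apply LLL to these padded vectors together with $v_1,\dots,v_\ell$, and let $L$ be the output basis; if the recurrence corresponding to the first vector of $L$ passes a given plausibility test, stop and return it. Then in every iteration $d$ that is executed, the vectors to which LLL is applied (the padded elements of the previous $L$ together with $v_1,\dots,v_\ell$) form a $\mathbb{Z}$-module basis of $\ker_{\mathbb{Z}}M_d$.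
   Context: Fix a $\mathbb{Q}$-basis $b_0,b_1,\dots$ of $\mathbb{Q}[x]$ such that for every $j$, $b_0,\dots,b_j$ span the polynomials of degree at most $j$. For given $a_0,\dots,a_N$ and $r\le N$, $A\in\mathbb{Q}^{(N-r+1)\times(r+1)}$ is the matrix with entry $a_{i+s}$ in row $i$, column $s$ ($0\le i\le N-r$, $0\le s\le r$), and $B_j\in\mathbb{Q}^{(N-r+1)\times(r+1)}$ is the matrix whose row $i$ has all entries equal to $b_j(i)$; $\odot$ is the entrywise product. Thus the first $r+1$ columns of $M_d$ are those of $A\odot B_d$. For a rational matrix $M$ with $m$ columns, $\ker_{\mathbb{Z}}M=\{x\in\mathbb{Z}^m:Mx=0\}$. An integer matrix is in Hermite normal form if it is in row echelon (staircase) form with positive pivot entries and each entry above a pivot is a nonnegative integer smaller than that pivot; every integer matrix has a unique Hermite normal form whose rows generate the same $\mathbb{Z}$-module as its rows. LLL is the Lenstra–Lenstra–Lovász reduction algorithm, which maps a $\mathbb{Z}$-module basis of a lattice to another $\mathbb{Z}$-module basis of the same lattice. *)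

theory Defs
  imports "HOL-Computational_Algebra.Polynomial"
begin

text \<open>Integer vectors are int lists; an integer matrix is a list of its rows.\<close>

definition adapted_poly_basis :: "(nat \<Rightarrow> rat poly) \<Rightarrow> bool" where
  "adapted_poly_basis b \<longleftrightarrow>
     (\<forall>n c. (\<Sum>i<n. smult (c i) (b i)) = 0 \<longrightarrow> (\<forall>i<n. c i = 0)) \<and>
     (\<forall>p. \<exists>n c. p = (\<Sum>i<n. smult (c i) (b i))) \<and>
     (\<forall>j. {p. degree p \<le> j} = {\<Sum>i\<le>j. smult (c i) (b i) | c. True})"

text \<open>Entry (i, col) of M_d = (A.B_d | A.B_{d-1} | ... | A.B_0): column col lies in block
  k = col div (r+1) (which is A.B_{d-k}) at position s = col mod (r+1); the entry is
  a_{i+s} * b_{d-k}(i).\<close>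
definition Mentry :: "(nat \<Rightarrow> int) \<Rightarrow> (nat \<Rightarrow> rat poly) \<Rightarrow> nat \<Rightarrow> nat \<Rightarrow> nat \<Rightarrow> nat \<Rightarrow> rat" where
  "Mentry a b r d i col =
     of_int (a (i + col mod (r+1))) * poly (b (d - col div (r+1))) (of_nat i)"

definition kerZ :: "(nat \<Rightarrow> int) \<Rightarrow> (nat \<Rightarrow> rat poly) \<Rightarrow> nat \<Rightarrow> nat \<Rightarrow> nat \<Rightarrow> int list set" where
  "kerZ a b N r d = {x. length x = (r+1)*(d+1) \<and>
     (\<forall>i\<le>N-r. (\<Sum>col<(r+1)*(d+1). Mentry a b r d i col * of_int (x ! col)) = 0)}"

definition lincomb :: "nat \<Rightarrow> (nat \<Rightarrow> int) \<Rightarrow> int list list \<Rightarrow> int list" where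
  "lincomb n c vs = map (\<lambda>j. \<Sum>i<length vs. c i * (vs ! i) ! j) [0..<n]"

definition zspan :: "nat \<Rightarrow> int list list \<Rightarrow> int list set" where
  "zspan n vs = {lincomb n c vs | c. True}"

definition zindep :: "nat \<Rightarrow> int list list \<Rightarrow> bool" where
  "zindep n vs \<longleftrightarrow> (\<forall>c. lincomb n c vs = replicate n 0 \<longrightarrow> (\<forall>i<length vs. c i = 0))"

definition is_zbasis :: "nat \<Rightarrow> int list list \<Rightarrow> int list set \<Rightarrow> bool" where
  "is_zbasis n vs K \<longleftrightarrow> (\<forall>v\<in>set vs. length v = n) \<and> zindep n vs \<and> zspan n vs = K"

definition nonzero_vec :: "int list \<Rightarrow> bool" where
  "nonzero_vec v \<longleftrightarrow> (\<exists>x\<in>set v. x \<noteq> 0)"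

definition pivot :: "int list \<Rightarrow> nat" where
  "pivot v = (LEAST j. j < length v \<and> v ! j \<noteq> 0)"

definition is_HNF :: "nat \<Rightarrow> int list list \<Rightarrow> bool" where
  "is_HNF n H \<longleftrightarrow>
     (\<forall>v\<in>set H. length v = n) \<and>
     (\<forall>i j. i < j \<and> j < length H \<and> nonzero_vec (H ! j) \<longrightarrow>
         nonzero_vec (H ! i) \<and> pivot (H ! i) < pivot (H ! j)) \<and>
     (\<forall>i<length H. nonzero_vec (H ! i) \<longrightarrow>
         H ! i ! pivot (H ! i) > 0 \<and>
         (\<forall>k<i. 0 \<le> H ! k ! pivot (H ! i) \<and> H ! k ! pivot (H ! i) < H ! i ! pivot (H ! i)))"

definition is_HNF_of :: "nat \<Rightarrow> int list list \<Rightarrow> int list list \<Rightarrow> bool" where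
  "is_HNF_of n W H \<longleftrightarrow> is_HNF n H \<and> length H = length W \<and> zspan n H = zspan n W"

definition lll_input :: "nat \<Rightarrow> nat \<Rightarrow> (nat \<Rightarrow> int list list) \<Rightarrow> (nat \<Rightarrow> int list list)
    \<Rightarrow> (nat \<Rightarrow> nat) \<Rightarrow> nat \<Rightarrow> int list list" where
  "lll_input r dmin L V ell d =
     (if d = dmin then [] else map (\<lambda>v. replicate (r+1) 0 @ v) (L (d-1))) @ take (ell d) (V d)"

end

theory Submission
  imports Defs
begin

text \<open>Induction on d; LLL only changes the basis of the lattice it is given, so it suffices
  that the LLL input spans ker M_d and is independent. Padding by r+1 leading zeros maps
  ker M_(d-1) bijectively onto the vectors of ker M_d whose first r+1 entries vanish, since
  the blocks of M_d after the first are exactly those of M_(d-1); hence the padded L spans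
  that sublattice. The nonzero rows of the Hermite normal form span ker M_d; those with a
  nonzero head (v_1, ..., v_l) have increasing pivots among the first r+1 columns, and the
  others lie in the padded sublattice. For independence, the first r+1 coordinates of a
  vanishing combination involve only v_1, ..., v_l, whose coefficients are forced to be zero
  by the echelon shape; then the independence of L does the rest.\<close>

definition pad_zeros :: "nat \<Rightarrow> int list \<Rightarrow> int list" where
  "pad_zeros k v = replicate k 0 @ v"

lemma sum_lessThan_add_nat: "(\<Sum>i<m + n. f i) = (\<Sum>i<m. f i) + (\<Sum>i<n. f (m + i))"
  for f :: "nat \<Rightarrow> 'a::comm_monoid_add"
  by (induction n) (auto simp: add_ac)

lemma length_lincomb [simp]: "length (lincomb n c vs) = n"
  by (simp add: lincomb_def)

lemma nth_lincomb [simp]: "j < n \<Longrightarrow> lincomb n c vs ! j = (\<Sum>i<length vs. c i * vs ! i ! j)"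
  by (simp add: lincomb_def)

lemma lincomb_eq_zero_iff:
  "lincomb n c vs = replicate n 0 \<longleftrightarrow> (\<forall>j<n. (\<Sum>i<length vs. c i * vs ! i ! j) = 0)"
  by (auto simp: list_eq_iff_nth_eq)

lemma mem_zspan_iff:
  "x \<in> zspan n vs \<longleftrightarrow> length x = n \<and> (\<exists>c. \<forall>j<n. x ! j = (\<Sum>i<length vs. c i * vs ! i ! j))"
proof
  assume "length x = n \<and> (\<exists>c. \<forall>j<n. x ! j = (\<Sum>i<length vs. c i * vs ! i ! j))"
  then obtain c where "length x = n" "\<forall>j<n. x ! j = (\<Sum>i<length vs. c i * vs ! i ! j)"
    by blast
  then have "x = lincomb n c vs"
    by (intro nth_equalityI) auto
  then show "x \<in> zspan n vs"
    by (auto simp: zspan_def)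
qed (auto simp: zspan_def)

lemma zspan_base:
  assumes "v \<in> set vs" "length v = n"
  shows "v \<in> zspan n vs"
proof -
  obtain k where k: "k < length vs" "vs ! k = v"
    using assms(1) by (auto simp: in_set_conv_nth)
  have "(\<Sum>i<length vs. (if i = k then 1 else 0) * vs ! i ! j)
          = (\<Sum>i<length vs. if i = k then vs ! k ! j else 0)" for j
    by (rule sum.cong) auto
  then have "v ! j = (\<Sum>i<length vs. (if i = k then 1 else 0) * vs ! i ! j)" for j
    using k by simp
  then show ?thesis
    unfolding mem_zspan_iff using assms(2) by (intro conjI exI[of _ "\<lambda>i. if i = k then 1 else 0"]) auto
qed

lemma zspan_zero: "replicate n 0 \<in> zspan n vs"
  unfolding mem_zspan_iff by (intro conjI exI[of _ "\<lambda>_. 0"]) auto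

lemma zspan_minimal:
  assumes "\<forall>w\<in>set ws. w \<in> zspan n vs"
  shows "zspan n ws \<subseteq> zspan n vs"
proof
  fix x assume "x \<in> zspan n ws"
  then obtain c where len_x: "length x = n"
    and x: "\<forall>j<n. x ! j = (\<Sum>k<length ws. c k * ws ! k ! j)"
    unfolding mem_zspan_iff by blast
  have "\<forall>k. \<exists>e. k < length ws \<longrightarrow> (\<forall>j<n. ws ! k ! j = (\<Sum>i<length vs. e i * vs ! i ! j))"
  proof
    fix k
    show "\<exists>e. k < length ws \<longrightarrow> (\<forall>j<n. ws ! k ! j = (\<Sum>i<length vs. e i * vs ! i ! j))"
    proof (cases "k < length ws")
      case True
      then have "ws ! k \<in> zspan n vs"
        using assms by simp
      then show ?thesis
        unfolding mem_zspan_iff by blast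
    qed simp
  qed
  then obtain e where e: "\<forall>k. k < length ws \<longrightarrow> (\<forall>j<n. ws ! k ! j = (\<Sum>i<length vs. e k i * vs ! i ! j))"
    by (rule choice[THEN exE]) blast
  have x_e: "x ! j = (\<Sum>i<length vs. (\<Sum>k<length ws. c k * e k i) * vs ! i ! j)" if "j < n" for j
  proof -
    have "x ! j = (\<Sum>k<length ws. c k * (\<Sum>i<length vs. e k i * vs ! i ! j))"
      using x e that by simp
    also have "\<dots> = (\<Sum>k<length ws. \<Sum>i<length vs. c k * e k i * vs ! i ! j)"
      by (simp add: sum_distrib_left mult.assoc)
    also have "\<dots> = (\<Sum>i<length vs. (\<Sum>k<length ws. c k * e k i) * vs ! i ! j)"
      by (subst sum.swap) (simp add: sum_distrib_right)
    finally show ?thesis .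
  qed
  show "x \<in> zspan n vs"
    unfolding mem_zspan_iff using len_x x_e
    by (intro conjI exI[of _ "\<lambda>i. \<Sum>k<length ws. c k * e k i"]) auto
qed

lemma zspan_append_left:
  assumes "\<forall>v\<in>set xs. length v = n"
  shows "zspan n xs \<subseteq> zspan n (xs @ ys)"
  using assms by (intro zspan_minimal ballI zspan_base) auto

lemma sum_lincomb_append:
  "(\<Sum>i<length (xs @ ys). c i * (xs @ ys) ! i ! j)
     = (\<Sum>i<length xs. c i * xs ! i ! j) + (\<Sum>i<length ys. c (length xs + i) * ys ! i ! j)"
proof -
  have "(\<Sum>i<length xs. c i * (xs @ ys) ! i ! j) = (\<Sum>i<length xs. c i * xs ! i ! j)"
    by (rule sum.cong) (auto simp: nth_append)
  then show ?thesis
    by (simp add: sum_lessThan_add_nat)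
qed

lemma nth_pad_zeros_add [simp]: "pad_zeros k v ! (k + j) = v ! j"
  by (simp add: pad_zeros_def nth_append)

lemma lincomb_pad_zeros:
  "lincomb (k + n) c (map (pad_zeros k) vs) = pad_zeros k (lincomb n c vs)"
  by (rule nth_equalityI) (auto simp: pad_zeros_def nth_append)

lemma zspan_pad_zeros: "zspan (k + n) (map (pad_zeros k) vs) = pad_zeros k ` zspan n vs"
  by (auto simp: zspan_def lincomb_pad_zeros)

lemma zindep_pad_zeros: "zindep (k + n) (map (pad_zeros k) vs) \<longleftrightarrow> zindep n vs"
proof -
  have "pad_zeros k (replicate n 0) = replicate (k + n) 0"
    by (simp add: pad_zeros_def replicate_add)
  then have "lincomb (k + n) c (map (pad_zeros k) vs) = replicate (k + n) 0
               \<longleftrightarrow> lincomb n c vs = replicate n 0" for c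
    by (metis lincomb_pad_zeros pad_zeros_def same_append_eq)
  then show ?thesis
    by (simp add: zindep_def)
qed

lemma pad_zeros_drop:
  assumes "\<forall>j<k. v ! j = 0" "k \<le> length v"
  shows "pad_zeros k (drop k v) = v"
  using assms by (intro nth_equalityI) (auto simp: pad_zeros_def nth_append)

lemma pivot_least:
  assumes "j < length v" "v ! j \<noteq> 0"
  shows "pivot v \<le> j" "v ! pivot v \<noteq> 0" "\<And>j'. j' < pivot v \<Longrightarrow> v ! j' = 0"
proof -
  let ?P = "\<lambda>j. j < length v \<and> v ! j \<noteq> 0"
  show "pivot v \<le> j"
    unfolding pivot_def by (rule Least_le) (use assms in blast)
  show "v ! pivot v \<noteq> 0"
    using LeastI[of ?P] assms unfolding pivot_def by blast
  show "v ! j' = 0" if "j' < pivot v" for j'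
    using that not_less_Least[of j' ?P] \<open>pivot v \<le> j\<close> assms(1)
    unfolding pivot_def by fastforce
qed

text \<open>Coefficients of rows with strictly increasing pivots, all inside the first q columns,
  are determined by those q coordinates: the column of the i-th pivot sees only rows \<le> i.\<close>
lemma echelon_coeffs_eq_zero:
  assumes incr: "\<forall>i j. i < j \<and> j < length U \<longrightarrow> pivot (U ! i) < pivot (U ! j)"
    and head: "\<forall>i<length U. \<exists>j<q. j < length (U ! i) \<and> U ! i ! j \<noteq> 0"
    and c: "\<forall>j<q. (\<Sum>k<length U. c k * U ! k ! j) = (0::int)"
  shows "\<forall>i<length U. c i = 0"
proof (intro allI impI)
  fix i show "i < length U \<Longrightarrow> c i = 0"
  proof (induction i rule: less_induct)
    case (less i)
    obtain j where j: "j < q" "j < length (U ! i)" "U ! i ! j \<noteq> 0"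
      using head less.prems by blast
    let ?p = "pivot (U ! i)"
    have below: "U ! k ! ?p = 0" if k: "i < k" "k < length U" for k
    proof -
      obtain j' where "j' < length (U ! k)" "U ! k ! j' \<noteq> 0"
        using head k(2) by blast
      moreover have "?p < pivot (U ! k)"
        using incr k by blast
      ultimately show ?thesis
        by (rule pivot_least(3))
    qed
    have "(\<Sum>k<length U. c k * U ! k ! ?p) = (\<Sum>k<length U. if k = i then c i * U ! i ! ?p else 0)"
    proof (rule sum.cong)
      fix k assume "k \<in> {..<length U}"
      then show "c k * U ! k ! ?p = (if k = i then c i * U ! i ! ?p else 0)"
        using less.IH[of k] below[of k] by (cases k i rule: linorder_cases) auto
    qed simp
    also have "\<dots> = c i * U ! i ! ?p"
      using less.prems by simp
    finally have "c i * U ! i ! ?p = 0"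
      using c pivot_least(1)[OF j(2,3)] j(1) by simp
    then show "c i = 0"
      using pivot_least(2)[OF j(2,3)] by simp
  qed
qed

lemma zindep_append:
  assumes xs_head: "\<forall>v\<in>set xs. \<forall>j<q. v ! j = 0" and "q \<le> n" and "zindep n xs"
    and ys: "\<And>c. \<forall>j<q. (\<Sum>i<length ys. c i * ys ! i ! j) = 0 \<Longrightarrow> \<forall>i<length ys. c i = 0"
  shows "zindep n (xs @ ys)"
  unfolding zindep_def
proof (intro allI impI)
  fix c k
  assume "lincomb n c (xs @ ys) = replicate n 0" and k: "k < length (xs @ ys)"
  then have sum0: "(\<Sum>i<length xs. c i * xs ! i ! j)
                     + (\<Sum>i<length ys. c (length xs + i) * ys ! i ! j) = 0" if "j < n" for j
    using that unfolding lincomb_eq_zero_iff sum_lincomb_append by blast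
  have "(\<Sum>i<length xs. c i * xs ! i ! j) = 0" if "j < q" for j
    using xs_head nth_mem that by (intro sum.neutral) auto
  then have "(\<Sum>i<length ys. c (length xs + i) * ys ! i ! j) = 0" if "j < q" for j
    using sum0[of j] that \<open>q \<le> n\<close> by simp
  then have ys0: "\<forall>i<length ys. c (length xs + i) = 0"
    using ys[of "\<lambda>i. c (length xs + i)"] by blast
  then have "(\<Sum>i<length ys. c (length xs + i) * ys ! i ! j) = 0" for j
    by (intro sum.neutral) auto
  then have "lincomb n c xs = replicate n 0"
    using sum0 unfolding lincomb_eq_zero_iff by simp
  then have xs0: "\<forall>i<length xs. c i = 0"
    using \<open>zindep n xs\<close> unfolding zindep_def by blast
  show "c k = 0"
  proof (cases "k < length xs")
    case False
    then have "k = length xs + (k - length xs)" "k - length xs < length ys"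
      using k by auto
    then show ?thesis
      using ys0 by metis
  qed (use xs0 in blast)
qed

lemma zspan_filter_nonzero_vec:
  assumes "\<forall>v\<in>set H. length v = n"
  shows "zspan n (filter nonzero_vec H) = zspan n H"
proof
  show "zspan n (filter nonzero_vec H) \<subseteq> zspan n H"
    using assms by (intro zspan_minimal ballI zspan_base) auto
  have "w \<in> zspan n (filter nonzero_vec H)" if "w \<in> set H" for w
  proof (cases "nonzero_vec w")
    case False
    then have "w = replicate n 0"
      using assms that by (auto simp: nonzero_vec_def list_eq_iff_nth_eq)
    then show ?thesis
      by (simp add: zspan_zero)
  qed (use assms that in \<open>auto intro: zspan_base\<close>)
  then show "zspan n H \<subseteq> zspan n (filter nonzero_vec H)"
    by (intro zspan_minimal) auto
qed

lemma filter_eq_takeWhile_if_downward_closed: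
  assumes "\<forall>i j. i < j \<and> j < length xs \<and> P (xs ! j) \<longrightarrow> P (xs ! i)"
  shows "filter P xs = takeWhile P xs"
  using assms
proof (induction xs)
  case (Cons x xs)
  show ?case
  proof (cases "P x")
    case True
    have "\<forall>i j. i < j \<and> j < length xs \<and> P (xs ! j) \<longrightarrow> P (xs ! i)"
    proof (intro allI impI)
      fix i j assume "i < j \<and> j < length xs \<and> P (xs ! j)"
      then show "P (xs ! i)"
        using Cons.prems[rule_format, of "Suc i" "Suc j"] by simp
    qed
    then have "filter P xs = takeWhile P xs"
      by (rule Cons.IH)
    then show ?thesis
      using True by simp
  next
    case False
    have "\<not> P y" if y: "y \<in> set xs" for y
    proof -
      obtain j where "j < length xs" "xs ! j = y"
        using y by (auto simp: in_set_conv_nth)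
      then show ?thesis
        using Cons.prems[rule_format, of 0 "Suc j"] False by auto
    qed
    then show ?thesis
      using False by (simp add: filter_empty_conv)
  qed
qed simp

lemma is_HNF_nonzero_rows_pivot_less:
  assumes "is_HNF n H" and "i < j" and "j < length (filter nonzero_vec H)"
  shows "pivot (filter nonzero_vec H ! i) < pivot (filter nonzero_vec H ! j)"
proof -
  have echelon: "\<forall>i j. i < j \<and> j < length H \<and> nonzero_vec (H ! j) \<longrightarrow>
                   nonzero_vec (H ! i) \<and> pivot (H ! i) < pivot (H ! j)"
    using assms(1) unfolding is_HNF_def by blast
  then have tw: "filter nonzero_vec H = takeWhile nonzero_vec H"
    by (intro filter_eq_takeWhile_if_downward_closed) blast
  have j: "j < length (takeWhile nonzero_vec H)"
    using assms(3) tw by simp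
  then have "j < length H"
    using length_takeWhile_le less_le_trans by blast
  moreover have "nonzero_vec (H ! j)"
    using j by (metis nth_mem set_takeWhileD takeWhile_nth)
  ultimately have "pivot (H ! i) < pivot (H ! j)"
    using echelon assms(2) by blast
  then show ?thesis
    using tw j assms(2) by (simp add: takeWhile_nth)
qed

lemma zspan_nonzero_rows_HNF:
  assumes "is_HNF_of n W H"
  shows "zspan n (filter nonzero_vec H) = zspan n W"
  using assms zspan_filter_nonzero_vec[of H n] by (simp add: is_HNF_of_def is_HNF_def)

subsection \<open>The kernels of consecutive matrices\<close>

lemma Mentry_Suc_shift: "Mentry a b r (Suc d) i (r + 1 + col) = Mentry a b r d i col"
proof -
  have "(r + 1 + col) mod (r + 1) = col mod (r + 1)"
    by (rule mod_add_self1)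
  moreover have "(r + 1 + col) div (r + 1) = col div (r + 1) + 1"
    by (rule div_add_self1) simp
  ultimately show ?thesis
    unfolding Mentry_def by simp
qed

text \<open>The first block of M_(d+1) meets only the padding zeros; the remaining blocks are
  those of M_d.\<close>
lemma sum_Mentry_pad_zeros:
  "(\<Sum>col<(r + 1) * (Suc d + 1). Mentry a b r (Suc d) i col * of_int (pad_zeros (r + 1) y ! col))
     = (\<Sum>col<(r + 1) * (d + 1). Mentry a b r d i col * of_int (y ! col))"
proof -
  have "(r + 1) * (Suc d + 1) = (r + 1) + (r + 1) * (d + 1)"
    by simp
  moreover have "(\<Sum>col<r + 1. Mentry a b r (Suc d) i col * of_int (pad_zeros (r + 1) y ! col)) = 0"
    by (intro sum.neutral) (simp add: pad_zeros_def nth_append del: replicate_Suc)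
  moreover have "(\<Sum>col<(r + 1) * (d + 1).
                    Mentry a b r (Suc d) i (r + 1 + col) * of_int (pad_zeros (r + 1) y ! (r + 1 + col)))
                 = (\<Sum>col<(r + 1) * (d + 1). Mentry a b r d i col * of_int (y ! col))"
    by (intro sum.cong) (simp_all only: Mentry_Suc_shift nth_pad_zeros_add)
  ultimately show ?thesis
    by (simp only: sum_lessThan_add_nat add_0)
qed

lemma pad_zeros_mem_kerZ_Suc_iff:
  assumes "length y = (r + 1) * (d + 1)"
  shows "pad_zeros (r + 1) y \<in> kerZ a b N r (Suc d) \<longleftrightarrow> y \<in> kerZ a b N r d"
proof -
  have "length (pad_zeros (r + 1) y) = (r + 1) * (Suc d + 1)"
    using assms by (simp add: pad_zeros_def)
  then show ?thesis
    using assms unfolding kerZ_def mem_Collect_eq sum_Mentry_pad_zeros by blast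
qed

subsection \<open>One step of the algorithm\<close>

lemma zspan_pad_zeros_append_take:
  assumes Ls_len: "\<forall>v\<in>set Ls. length v = n0"
    and Ls_span: "zspan n0 Ls = K0"
    and pad_iff: "\<forall>y. length y = n0 \<longrightarrow> (pad_zeros q y \<in> K \<longleftrightarrow> y \<in> K0)"
    and Vs_len: "\<forall>v\<in>set Vs. length v = q + n0"
    and Vs_span: "zspan (q + n0) Vs = K"
    and head: "\<forall>i<length Vs. (\<forall>j<q. Vs ! i ! j = 0) \<longleftrightarrow> e \<le> i"
  shows "zspan (q + n0) (map (pad_zeros q) Ls @ take e Vs) = K"
proof
  let ?n = "q + n0" and ?P = "map (pad_zeros q) Ls" and ?U = "take e Vs"
  have len: "\<forall>v\<in>set (?P @ ?U). length v = ?n"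
    using Ls_len Vs_len by (auto simp: pad_zeros_def dest: in_set_takeD)
  have "pad_zeros q y \<in> K" if "y \<in> set Ls" for y
    using that pad_iff Ls_len Ls_span zspan_base by auto
  moreover have "v \<in> K" if "v \<in> set ?U" for v
    using that Vs_len Vs_span zspan_base by (auto dest: in_set_takeD)
  ultimately show "zspan ?n (?P @ ?U) \<subseteq> K"
    unfolding Vs_span[symmetric] by (intro zspan_minimal) (auto simp: Vs_span)
  show "K \<subseteq> zspan ?n (?P @ ?U)"
    unfolding Vs_span[symmetric]
  proof (intro zspan_minimal ballI)
    fix w assume "w \<in> set Vs"
    then obtain i where i: "i < length Vs" "Vs ! i = w"
      by (metis in_set_conv_nth)
    show "w \<in> zspan ?n (?P @ ?U)"
    proof (cases "i < e")
      case True
      then have "w \<in> set ?U"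
        using i by (metis in_set_conv_nth length_take min_less_iff_conj nth_take)
      then show ?thesis
        using len by (intro zspan_base) auto
    next
      case False
      then have w: "pad_zeros q (drop q w) = w"
        using head i Vs_len by (intro pad_zeros_drop) auto
      moreover have "w \<in> K"
        using \<open>w \<in> set Vs\<close> Vs_len Vs_span zspan_base by blast
      ultimately have "drop q w \<in> K0"
        using pad_iff Vs_len \<open>w \<in> set Vs\<close> by force
      then have "w \<in> zspan ?n ?P"
        using Ls_span zspan_pad_zeros w by (metis image_eqI)
      moreover have "zspan ?n ?P \<subseteq> zspan ?n (?P @ ?U)"
        using len by (intro zspan_append_left) auto
      ultimately show ?thesis
        by blast
    qed
  qed
qed

lemma zindep_pad_zeros_append_take:
  assumes "zindep n0 Ls"
    and Vs_len: "\<forall>v\<in>set Vs. length v = q + n0"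
    and incr: "\<forall>i j. i < j \<and> j < length Vs \<longrightarrow> pivot (Vs ! i) < pivot (Vs ! j)"
    and head: "\<forall>i<length Vs. (\<forall>j<q. Vs ! i ! j = 0) \<longleftrightarrow> e \<le> i"
  shows "zindep (q + n0) (map (pad_zeros q) Ls @ take e Vs)"
proof (rule zindep_append[where q = q])
  show "\<forall>v\<in>set (map (pad_zeros q) Ls). \<forall>j<q. v ! j = 0"
    by (auto simp: pad_zeros_def nth_append)
  show "zindep (q + n0) (map (pad_zeros q) Ls)"
    using \<open>zindep n0 Ls\<close> zindep_pad_zeros by blast
  fix c
  let ?U = "take e Vs"
  assume "\<forall>j<q. (\<Sum>i<length ?U. c i * ?U ! i ! j) = 0"
  moreover have "\<forall>i j. i < j \<and> j < length ?U \<longrightarrow> pivot (?U ! i) < pivot (?U ! j)"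
    using incr by simp
  moreover have "\<forall>i<length ?U. \<exists>j<q. j < length (?U ! i) \<and> ?U ! i ! j \<noteq> 0"
    using head Vs_len by (auto simp: less_le_trans[OF _ le_add1])
  ultimately show "\<forall>i<length ?U. c i = 0"
    by (intro echelon_coeffs_eq_zero)
qed simp

lemma lll_input_Suc:
  assumes "dmin \<le> d"
  shows "lll_input r dmin L V ell (Suc d)
           = map (pad_zeros (r + 1)) (L d) @ take (ell (Suc d)) (V (Suc d))"
  using assms by (simp add: lll_input_def pad_zeros_def)

lemma is_zbasis_lll_input_Suc:
  fixes r d :: nat
  defines "n \<equiv> (r + 1) * (Suc d + 1)"
  assumes "dmin \<le> d"
    and L: "is_zbasis ((r + 1) * (d + 1)) (L d) (kerZ a b N r d)"
    and W: "is_zbasis n (W (Suc d)) (kerZ a b N r (Suc d))"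
    and HNF: "is_HNF_of n (W (Suc d)) (H (Suc d))"
    and V: "V (Suc d) = filter nonzero_vec (H (Suc d))"
    and head: "\<forall>i<length (V (Suc d)). (\<forall>j<r + 1. V (Suc d) ! i ! j = 0) \<longleftrightarrow> ell (Suc d) \<le> i"
  shows "is_zbasis n (lll_input r dmin L V ell (Suc d)) (kerZ a b N r (Suc d))"
proof -
  have dim: "n = (r + 1) + (r + 1) * (d + 1)"
    by (simp add: n_def)
  have V_len: "\<forall>v\<in>set (V (Suc d)). length v = n"
    using HNF V by (auto simp: is_HNF_of_def is_HNF_def)
  have V_span: "zspan n (V (Suc d)) = kerZ a b N r (Suc d)"
    using zspan_nonzero_rows_HNF[OF HNF] W V by (simp add: is_zbasis_def)
  have V_incr: "\<forall>i j. i < j \<and> j < length (V (Suc d)) \<longrightarrow> pivot (V (Suc d) ! i) < pivot (V (Suc d) ! j)"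
    using HNF V is_HNF_nonzero_rows_pivot_less by (auto simp: is_HNF_of_def)
  have "zspan n (lll_input r dmin L V ell (Suc d)) = kerZ a b N r (Suc d)"
    using L V_len V_span head pad_zeros_mem_kerZ_Suc_iff
    unfolding lll_input_Suc[OF \<open>dmin \<le> d\<close>] dim is_zbasis_def
    by (intro zspan_pad_zeros_append_take) auto
  moreover have "zindep n (lll_input r dmin L V ell (Suc d))"
    using L V_len V_incr head
    unfolding lll_input_Suc[OF \<open>dmin \<le> d\<close>] dim is_zbasis_def
    by (intro zindep_pad_zeros_append_take) auto
  moreover have "\<forall>v\<in>set (lll_input r dmin L V ell (Suc d)). length v = n"
    using L V_len unfolding lll_input_Suc[OF \<open>dmin \<le> d\<close>] dim is_zbasis_def
    by (auto simp: pad_zeros_def dest: in_set_takeD)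
  ultimately show ?thesis
    by (simp add: is_zbasis_def)
qed

theorem mainTheorem2:
  fixes a :: "nat \<Rightarrow> int" and b :: "nat \<Rightarrow> rat poly"
    and N r dmin dmax dlast :: nat
    and W H V L :: "nat \<Rightarrow> int list list" and ell :: "nat \<Rightarrow> nat"
    and test :: "int list \<Rightarrow> bool"
  assumes b_basis: "adapted_poly_basis b"
    and rN: "r \<le> N" and dd: "dmin \<le> dmax"
    and last: "dmin \<le> dlast" "dlast \<le> dmax"
    and not_stopped: "\<forall>d. dmin \<le> d \<and> d < dlast \<longrightarrow> \<not> test (hd (L d))"
    and kernel_basis: "\<forall>d. dmin \<le> d \<and> d \<le> dlast \<longrightarrow>
          is_zbasis ((r+1)*(d+1)) (W d) (kerZ a b N r d)"
    and first_iter: "V dmin = W dmin" "ell dmin = length (V dmin)"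
    and later_iter: "\<forall>d. dmin < d \<and> d \<le> dlast \<longrightarrow>
          is_HNF_of ((r+1)*(d+1)) (W d) (H d) \<and>
          V d = filter nonzero_vec (H d) \<and>
          ell d \<le> length (V d) \<and>
          (\<forall>i<length (V d). (\<forall>j<r+1. V d ! i ! j = 0) \<longleftrightarrow> ell d \<le> i)"
    and lll: "\<forall>d. dmin \<le> d \<and> d \<le> dlast \<longrightarrow>
          is_zbasis ((r+1)*(d+1)) (lll_input r dmin L V ell d)
                    (zspan ((r+1)*(d+1)) (lll_input r dmin L V ell d)) \<longrightarrow>
          is_zbasis ((r+1)*(d+1)) (L d) (zspan ((r+1)*(d+1)) (lll_input r dmin L V ell d))"
  shows "\<forall>d. dmin \<le> d \<and> d \<le> dlast \<longrightarrow>
          is_zbasis ((r+1)*(d+1)) (lll_input r dmin L V ell d) (kerZ a b N r d)"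
proof (intro allI impI)
  fix d assume "dmin \<le> d \<and> d \<le> dlast"
  then have "dmin \<le> d" "d \<le> dlast"
    by auto
  then show "is_zbasis ((r+1)*(d+1)) (lll_input r dmin L V ell d) (kerZ a b N r d)"
  proof (induction d rule: nat_induct_at_least)
    case base
    then show ?case
      using first_iter kernel_basis by (simp add: lll_input_def)
  next
    case (Suc d)
    then have "is_zbasis ((r+1)*(d+1)) (L d) (kerZ a b N r d)"
      using lll by (simp add: is_zbasis_def)
    then show ?case
      using Suc kernel_basis[rule_format, of "Suc d"] later_iter[rule_format, of "Suc d"]
      by (intro is_zbasis_lll_input_Suc[where W = W and H = H]) auto
  qed
qed

end
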